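(* Let $G$ be a digraph and $i\le0\le j$ integers. Then $G$ has polymorphisms witnessing the $\operatorname{SD}(\vee)$ property if and only if $G^{[i,j]}$ has.
   Context: Digraphs are finite and loopless. For $G=(V,E)$, $G^{[i,j]}$ is the digraph on $\{i,\dots,-1\}\cup V\cup\{1,\dots,j\}$ (disjoint union) whose edges are: $u\to w$ for integers $u<w$ in $\{i,\dots,-1,1,\dots,j\}$; the edges of $E$; $u\to v$ for every integer $u<0$ and $v\in V$; $v\to u$ for every $v\in V$ and integer $u>0$. A polymorphism is a map $f:V^k\to V$ with $(f(a_1,\dots,a_k),f(b_1,\dots,b_k))\in E$ whenever all $(a_i,b_i)\in E$. $\operatorname{SD}(\vee)$ means both of: (a) there are a $3$-ary and a $4$-ary weak NU polymorphism $w_1,w_2$ (idempotent, with $w(y,x,\dots,x)=w(x,y,x,\dots,x)=\dots=w(x,\dots,x,y)$) with $w_1(y,x,x)=w_2(y,x,x,x)$; (b) the Hobby–McKenzie property: there are $n\ge0$ and idempotent ternary polymorphisms $d_0,\dots,d_n,p,e_0,\dots,e_n$ with $x=d_0(x,y,z)$, $e_n(x,y,z)=z$; $d_i(x,y,y)=d_{i+1}(x,y,y)$ and $e_i(x,y,y)=e_{i+1}(x,y,y)$ for even $i<n$; $d_i(x,x,y)=d_{i+1}(x,x,y)$ and $e_i(x,x,y)=e_{i+1}(x,x,y)$ for odd $i<n$; $d_n(x,y,y)=p(x,y,y)$ and $p(x,x,y)=e_0(x,x,y)$; $d_i(x,y,x)=d_{i+1}(x,y,x)$ for odd $i<n$ and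 $e_j(x,y,x)=e_{j+1}(x,y,x)$ for even $j<n$. *)

theory Defs
  imports Main
begin

definition digraph :: "'a set \<Rightarrow> ('a \<times> 'a) set \<Rightarrow> bool" where
  "digraph V E \<longleftrightarrow> finite V \<and> E \<subseteq> V \<times> V \<and> (\<forall>v. (v, v) \<notin> E)"

definition blowup_vertices :: "'a set \<Rightarrow> int \<Rightarrow> int \<Rightarrow> ('a + int) set" where
  "blowup_vertices V i j = Inl ` V \<union> Inr ` ({i..-1} \<union> {1..j})"

definition blowup_edges ::
  "'a set \<Rightarrow> ('a \<times> 'a) set \<Rightarrow> int \<Rightarrow> int \<Rightarrow> (('a + int) \<times> ('a + int)) set" where
  "blowup_edges V E i j =
     {(Inr u, Inr w) | u w. u \<in> {i..-1} \<union> {1..j} \<and> w \<in> {i..-1} \<union> {1..j} \<and> u < w}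
   \<union> {(Inl a, Inl b) | a b. (a, b) \<in> E}
   \<union> {(Inr u, Inl v) | u v. u \<in> {i..-1} \<and> v \<in> V}
   \<union> {(Inl v, Inr u) | v u. v \<in> V \<and> u \<in> {1..j}}"

definition pol3 :: "'a set \<Rightarrow> ('a \<times> 'a) set \<Rightarrow> ('a \<Rightarrow> 'a \<Rightarrow> 'a \<Rightarrow> 'a) \<Rightarrow> bool" where
  "pol3 V E f \<longleftrightarrow>
     (\<forall>a1\<in>V. \<forall>a2\<in>V. \<forall>a3\<in>V. f a1 a2 a3 \<in> V) \<and>
     (\<forall>a1 a2 a3 b1 b2 b3. (a1, b1) \<in> E \<and> (a2, b2) \<in> E \<and> (a3, b3) \<in> E
        \<longrightarrow> (f a1 a2 a3, f b1 b2 b3) \<in> E)"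

definition pol4 :: "'a set \<Rightarrow> ('a \<times> 'a) set \<Rightarrow> ('a \<Rightarrow> 'a \<Rightarrow> 'a \<Rightarrow> 'a \<Rightarrow> 'a) \<Rightarrow> bool" where
  "pol4 V E f \<longleftrightarrow>
     (\<forall>a1\<in>V. \<forall>a2\<in>V. \<forall>a3\<in>V. \<forall>a4\<in>V. f a1 a2 a3 a4 \<in> V) \<and>
     (\<forall>a1 a2 a3 a4 b1 b2 b3 b4. (a1, b1) \<in> E \<and> (a2, b2) \<in> E \<and> (a3, b3) \<in> E \<and> (a4, b4) \<in> E
        \<longrightarrow> (f a1 a2 a3 a4, f b1 b2 b3 b4) \<in> E)"

definition idem3 :: "'a set \<Rightarrow> ('a \<Rightarrow> 'a \<Rightarrow> 'a \<Rightarrow> 'a) \<Rightarrow> bool" where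
  "idem3 V f \<longleftrightarrow> (\<forall>x\<in>V. f x x x = x)"

definition weak_nu3 :: "'a set \<Rightarrow> ('a \<Rightarrow> 'a \<Rightarrow> 'a \<Rightarrow> 'a) \<Rightarrow> bool" where
  "weak_nu3 V w \<longleftrightarrow> idem3 V w \<and>
     (\<forall>x\<in>V. \<forall>y\<in>V. w y x x = w x y x \<and> w x y x = w x x y)"

definition weak_nu4 :: "'a set \<Rightarrow> ('a \<Rightarrow> 'a \<Rightarrow> 'a \<Rightarrow> 'a \<Rightarrow> 'a) \<Rightarrow> bool" where
  "weak_nu4 V w \<longleftrightarrow> (\<forall>x\<in>V. w x x x x = x) \<and>
     (\<forall>x\<in>V. \<forall>y\<in>V. w y x x x = w x y x x \<and> w x y x x = w x x y x \<and> w x x y x = w x x x y)"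

definition has_wnu34 :: "'a set \<Rightarrow> ('a \<times> 'a) set \<Rightarrow> bool" where
  "has_wnu34 V E \<longleftrightarrow> (\<exists>w1 w2. pol3 V E w1 \<and> pol4 V E w2 \<and> weak_nu3 V w1 \<and> weak_nu4 V w2 \<and>
      (\<forall>x\<in>V. \<forall>y\<in>V. w1 y x x = w2 y x x x))"

definition hobby_mckenzie :: "'a set \<Rightarrow> ('a \<times> 'a) set \<Rightarrow> bool" where
  "hobby_mckenzie V E \<longleftrightarrow>
    (\<exists>(n::nat) (d :: nat \<Rightarrow> 'a \<Rightarrow> 'a \<Rightarrow> 'a \<Rightarrow> 'a) p (e :: nat \<Rightarrow> 'a \<Rightarrow> 'a \<Rightarrow> 'a \<Rightarrow> 'a).
       (\<forall>k\<le>n. pol3 V E (d k) \<and> idem3 V (d k) \<and> pol3 V E (e k) \<and> idem3 V (e k)) \<and>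
       pol3 V E p \<and> idem3 V p \<and>
       (\<forall>x\<in>V. \<forall>y\<in>V. \<forall>z\<in>V. d 0 x y z = x \<and> e n x y z = z) \<and>
       (\<forall>k<n. even k \<longrightarrow> (\<forall>x\<in>V. \<forall>y\<in>V.
           d k x y y = d (Suc k) x y y \<and> e k x y y = e (Suc k) x y y)) \<and>
       (\<forall>k<n. odd k \<longrightarrow> (\<forall>x\<in>V. \<forall>y\<in>V.
           d k x x y = d (Suc k) x x y \<and> e k x x y = e (Suc k) x x y)) \<and>
       (\<forall>x\<in>V. \<forall>y\<in>V. d n x y y = p x y y \<and> p x x y = e 0 x x y) \<and>
       (\<forall>k<n. odd k \<longrightarrow> (\<forall>x\<in>V. \<forall>y\<in>V. d k x y x = d (Suc k) x y x)) \<and>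
       (\<forall>k<n. even k \<longrightarrow> (\<forall>x\<in>V. \<forall>y\<in>V. e k x y x = e (Suc k) x y x)))"

definition SD_join :: "'a set \<Rightarrow> ('a \<times> 'a) set \<Rightarrow> bool" where
  "SD_join V E \<longleftrightarrow> has_wnu34 V E \<and> hobby_mckenzie V E"

end

theory Submission
  imports Defs
begin

(*
  A new source s can be added to a digraph without affecting SD(\<or>).  An
  operation f extends by making s absorbing (any tuple containing s is sent to
  s); this preserves edges because s points to every old vertex and old
  vertices are never sent to s.  The absorbing extensions of weak NU operations
  are weak NU, but the absorbing extension of d\<^sub>0 is no longer the first
  projection, so the Hobby--McKenzie chain is lengthened by one bridging
  operation at each end.  Conversely, an idempotent polymorphism of the
  extension maps the out-neighbours of s, i.e. the old vertices, into
  themselves, so it restricts to a polymorphism of the old digraph.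

  A sink is a source of the reversed digraph, and the identities of SD(\<or>) do
  not involve edges.  Starting from a copy of G, the digraph G^[i,j] is
  obtained by adding j sinks and then -i sources, one at a time.
*)

lemma pol3I:
  assumes "\<And>a b c. a \<in> V \<Longrightarrow> b \<in> V \<Longrightarrow> c \<in> V \<Longrightarrow> f a b c \<in> V"
    and "\<And>a1 a2 a3 b1 b2 b3. (a1, b1) \<in> E \<Longrightarrow> (a2, b2) \<in> E \<Longrightarrow> (a3, b3) \<in> E
           \<Longrightarrow> (f a1 a2 a3, f b1 b2 b3) \<in> E"
  shows "pol3 V E f"
  using assms unfolding pol3_def by blast

lemma pol4I:
  assumes "\<And>a b c d. a \<in> V \<Longrightarrow> b \<in> V \<Longrightarrow> c \<in> V \<Longrightarrow> d \<in> V \<Longrightarrow> f a b c d \<in> V"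
    and "\<And>a1 a2 a3 a4 b1 b2 b3 b4. (a1, b1) \<in> E \<Longrightarrow> (a2, b2) \<in> E \<Longrightarrow> (a3, b3) \<in> E
           \<Longrightarrow> (a4, b4) \<in> E \<Longrightarrow> (f a1 a2 a3 a4, f b1 b2 b3 b4) \<in> E"
  shows "pol4 V E f"
  using assms unfolding pol4_def by blast

lemma pol3_closed: "pol3 V E f \<Longrightarrow> a \<in> V \<Longrightarrow> b \<in> V \<Longrightarrow> c \<in> V \<Longrightarrow> f a b c \<in> V"
  unfolding pol3_def by blast

lemma pol3_edge:
  "pol3 V E f \<Longrightarrow> (a1, b1) \<in> E \<Longrightarrow> (a2, b2) \<in> E \<Longrightarrow> (a3, b3) \<in> E
    \<Longrightarrow> (f a1 a2 a3, f b1 b2 b3) \<in> E"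
  unfolding pol3_def by blast

lemma pol4_closed: "pol4 V E f \<Longrightarrow> a \<in> V \<Longrightarrow> b \<in> V \<Longrightarrow> c \<in> V \<Longrightarrow> d \<in> V \<Longrightarrow> f a b c d \<in> V"
  unfolding pol4_def by blast

lemma pol4_edge:
  "pol4 V E f \<Longrightarrow> (a1, b1) \<in> E \<Longrightarrow> (a2, b2) \<in> E \<Longrightarrow> (a3, b3) \<in> E \<Longrightarrow> (a4, b4) \<in> E
    \<Longrightarrow> (f a1 a2 a3 a4, f b1 b2 b3 b4) \<in> E"
  unfolding pol4_def by blast

section \<open>Hobby--McKenzie chains\<close>

definition agree_xyy :: "'a set \<Rightarrow> ('a \<Rightarrow> 'a \<Rightarrow> 'a \<Rightarrow> 'a) \<Rightarrow> ('a \<Rightarrow> 'a \<Rightarrow> 'a \<Rightarrow> 'a) \<Rightarrow> bool" where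
  "agree_xyy V f g \<longleftrightarrow> (\<forall>x\<in>V. \<forall>y\<in>V. f x y y = g x y y)"

definition agree_xxy :: "'a set \<Rightarrow> ('a \<Rightarrow> 'a \<Rightarrow> 'a \<Rightarrow> 'a) \<Rightarrow> ('a \<Rightarrow> 'a \<Rightarrow> 'a \<Rightarrow> 'a) \<Rightarrow> bool" where
  "agree_xxy V f g \<longleftrightarrow> (\<forall>x\<in>V. \<forall>y\<in>V. f x x y = g x x y)"

definition agree_xyx :: "'a set \<Rightarrow> ('a \<Rightarrow> 'a \<Rightarrow> 'a \<Rightarrow> 'a) \<Rightarrow> ('a \<Rightarrow> 'a \<Rightarrow> 'a \<Rightarrow> 'a) \<Rightarrow> bool" where
  "agree_xyx V f g \<longleftrightarrow> (\<forall>x\<in>V. \<forall>y\<in>V. f x y x = g x y x)"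

definition d_link :: "'a set \<Rightarrow> nat \<Rightarrow> ('a \<Rightarrow> 'a \<Rightarrow> 'a \<Rightarrow> 'a) \<Rightarrow> ('a \<Rightarrow> 'a \<Rightarrow> 'a \<Rightarrow> 'a) \<Rightarrow> bool" where
  "d_link V k f g \<longleftrightarrow> (if even k then agree_xyy V f g else agree_xxy V f g \<and> agree_xyx V f g)"

definition e_link :: "'a set \<Rightarrow> nat \<Rightarrow> ('a \<Rightarrow> 'a \<Rightarrow> 'a \<Rightarrow> 'a) \<Rightarrow> ('a \<Rightarrow> 'a \<Rightarrow> 'a \<Rightarrow> 'a) \<Rightarrow> bool" where
  "e_link V k f g \<longleftrightarrow> (if even k then agree_xyy V f g \<and> agree_xyx V f g else agree_xxy V f g)"

lemma d_link_refl: "d_link V k f f"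
  unfolding d_link_def agree_xyy_def agree_xxy_def agree_xyx_def by simp

lemma e_link_refl: "e_link V k f f"
  unfolding e_link_def agree_xyy_def agree_xxy_def agree_xyx_def by simp

lemma d_link_mono: "d_link V k f g \<Longrightarrow> U \<subseteq> V \<Longrightarrow> d_link U k f g"
  unfolding d_link_def agree_xyy_def agree_xxy_def agree_xyx_def
  by (auto split: if_splits simp: subset_iff)

lemma e_link_mono: "e_link V k f g \<Longrightarrow> U \<subseteq> V \<Longrightarrow> e_link U k f g"
  unfolding e_link_def agree_xyy_def agree_xxy_def agree_xyx_def
  by (auto split: if_splits simp: subset_iff)

lemma d_link_Suc_Suc [simp]: "d_link V (Suc (Suc k)) = d_link V k"
  unfolding d_link_def by simp

definition idem_pol3 :: "'a set \<Rightarrow> ('a \<times> 'a) set \<Rightarrow> ('a \<Rightarrow> 'a \<Rightarrow> 'a \<Rightarrow> 'a) \<Rightarrow> bool" where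
  "idem_pol3 V E f \<longleftrightarrow> pol3 V E f \<and> idem3 V f"

definition hm_chain ::
  "'a set \<Rightarrow> ('a \<times> 'a) set \<Rightarrow> nat \<Rightarrow> (nat \<Rightarrow> 'a \<Rightarrow> 'a \<Rightarrow> 'a \<Rightarrow> 'a) \<Rightarrow> ('a \<Rightarrow> 'a \<Rightarrow> 'a \<Rightarrow> 'a)
    \<Rightarrow> (nat \<Rightarrow> 'a \<Rightarrow> 'a \<Rightarrow> 'a \<Rightarrow> 'a) \<Rightarrow> bool" where
  "hm_chain V E n d p e \<longleftrightarrow>
     (\<forall>k\<le>n. idem_pol3 V E (d k) \<and> idem_pol3 V E (e k)) \<and> idem_pol3 V E p \<and>
     (\<forall>x\<in>V. \<forall>y\<in>V. \<forall>z\<in>V. d 0 x y z = x \<and> e n x y z = z) \<and>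
     (\<forall>k<n. d_link V k (d k) (d (Suc k)) \<and> e_link V k (e k) (e (Suc k))) \<and>
     agree_xyy V (d n) p \<and> agree_xxy V p (e 0)"

lemma hobby_mckenzie_iff_hm_chain: "hobby_mckenzie V E \<longleftrightarrow> (\<exists>n d p e. hm_chain V E n d p e)"
proof -
  have "hm_chain V E n d p e \<longleftrightarrow>
       (\<forall>k\<le>n. pol3 V E (d k) \<and> idem3 V (d k) \<and> pol3 V E (e k) \<and> idem3 V (e k)) \<and>
       pol3 V E p \<and> idem3 V p \<and>
       (\<forall>x\<in>V. \<forall>y\<in>V. \<forall>z\<in>V. d 0 x y z = x \<and> e n x y z = z) \<and>
       (\<forall>k<n. even k \<longrightarrow> (\<forall>x\<in>V. \<forall>y\<in>V.
           d k x y y = d (Suc k) x y y \<and> e k x y y = e (Suc k) x y y)) \<and>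
       (\<forall>k<n. odd k \<longrightarrow> (\<forall>x\<in>V. \<forall>y\<in>V.
           d k x x y = d (Suc k) x x y \<and> e k x x y = e (Suc k) x x y)) \<and>
       (\<forall>x\<in>V. \<forall>y\<in>V. d n x y y = p x y y \<and> p x x y = e 0 x x y) \<and>
       (\<forall>k<n. odd k \<longrightarrow> (\<forall>x\<in>V. \<forall>y\<in>V. d k x y x = d (Suc k) x y x)) \<and>
       (\<forall>k<n. even k \<longrightarrow> (\<forall>x\<in>V. \<forall>y\<in>V. e k x y x = e (Suc k) x y x))" for n d p e
    unfolding hm_chain_def idem_pol3_def d_link_def e_link_def agree_xyy_def agree_xxy_def agree_xyx_def
    by (auto split: if_splits)
  then show ?thesis
    unfolding hobby_mckenzie_def by presburger
qed

lemma hm_chain_Suc: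
  assumes "hm_chain V E n d p e"
  shows "hm_chain V E (Suc n) (\<lambda>k. d (min k n)) p (\<lambda>k. e (min k n))"
proof -
  have "d_link V k (d (min k n)) (d (min (Suc k) n)) \<and> e_link V k (e (min k n)) (e (min (Suc k) n))"
    if "k < Suc n" for k
  proof (cases "k < n")
    case True
    then show ?thesis using assms unfolding hm_chain_def by (simp add: Suc_leI min_absorb1)
  next
    case False
    with that have "k = n" by simp
    then show ?thesis by (simp add: d_link_refl e_link_refl)
  qed
  with assms show ?thesis
    unfolding hm_chain_def by simp
qed

lemma hm_chain_even_length:
  assumes "hm_chain V E n d p e"
  obtains n' d' e' where "even n'" "hm_chain V E n' d' p e'"
proof (cases "even n")
  case False
  then show ?thesis using that[OF _ hm_chain_Suc[OF assms]] by simp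
qed (use that assms in blast)

section \<open>Isomorphic copies\<close>

definition transport3 ::
  "('a \<Rightarrow> 'b) \<Rightarrow> ('b \<Rightarrow> 'a) \<Rightarrow> ('a \<Rightarrow> 'a \<Rightarrow> 'a \<Rightarrow> 'a) \<Rightarrow> 'b \<Rightarrow> 'b \<Rightarrow> 'b \<Rightarrow> 'b" where
  "transport3 h g f x y z = h (f (g x) (g y) (g z))"

definition transport4 ::
  "('a \<Rightarrow> 'b) \<Rightarrow> ('b \<Rightarrow> 'a) \<Rightarrow> ('a \<Rightarrow> 'a \<Rightarrow> 'a \<Rightarrow> 'a \<Rightarrow> 'a) \<Rightarrow> 'b \<Rightarrow> 'b \<Rightarrow> 'b \<Rightarrow> 'b \<Rightarrow> 'b" where
  "transport4 h g f x y z w = h (f (g x) (g y) (g z) (g w))"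

context
  fixes h :: "'a \<Rightarrow> 'b" and g :: "'b \<Rightarrow> 'a" and V :: "'a set" and E :: "('a \<times> 'a) set"
  assumes left_inverse: "\<And>a. a \<in> V \<Longrightarrow> g (h a) = a"
    and edges_in_V: "E \<subseteq> V \<times> V"
begin

lemma transport3_image [simp]:
  "a \<in> V \<Longrightarrow> b \<in> V \<Longrightarrow> c \<in> V \<Longrightarrow> transport3 h g f (h a) (h b) (h c) = h (f a b c)"
  unfolding transport3_def by (simp add: left_inverse)

lemma transport4_image [simp]:
  "a \<in> V \<Longrightarrow> b \<in> V \<Longrightarrow> c \<in> V \<Longrightarrow> d \<in> V
    \<Longrightarrow> transport4 h g f (h a) (h b) (h c) (h d) = h (f a b c d)"
  unfolding transport4_def by (simp add: left_inverse)

lemma transported_edge_cases: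
  assumes "(a, b) \<in> map_prod h h ` E"
  obtains x y where "(x, y) \<in> E" "x \<in> V" "y \<in> V" "a = h x" "b = h y"
  using assms edges_in_V by blast

lemma pol3_transport:
  assumes "pol3 V E f"
  shows "pol3 (h ` V) (map_prod h h ` E) (transport3 h g f)"
proof (rule pol3I)
  fix a1 a2 a3 b1 b2 b3
  assume "(a1, b1) \<in> map_prod h h ` E" "(a2, b2) \<in> map_prod h h ` E" "(a3, b3) \<in> map_prod h h ` E"
  then show "(transport3 h g f a1 a2 a3, transport3 h g f b1 b2 b3) \<in> map_prod h h ` E"
    by (elim transported_edge_cases) (simp add: map_prod_imageI pol3_edge[OF assms])
qed (use pol3_closed[OF assms] in auto)

lemma pol4_transport:
  assumes "pol4 V E f"
  shows "pol4 (h ` V) (map_prod h h ` E) (transport4 h g f)"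
proof (rule pol4I)
  fix a1 a2 a3 a4 b1 b2 b3 b4
  assume "(a1, b1) \<in> map_prod h h ` E" "(a2, b2) \<in> map_prod h h ` E"
    "(a3, b3) \<in> map_prod h h ` E" "(a4, b4) \<in> map_prod h h ` E"
  then show "(transport4 h g f a1 a2 a3 a4, transport4 h g f b1 b2 b3 b4) \<in> map_prod h h ` E"
    by (elim transported_edge_cases) (simp add: map_prod_imageI pol4_edge[OF assms])
qed (use pol4_closed[OF assms] in auto)

lemma idem_pol3_transport:
  "idem_pol3 V E f \<Longrightarrow> idem_pol3 (h ` V) (map_prod h h ` E) (transport3 h g f)"
  unfolding idem_pol3_def idem3_def using pol3_transport by auto

lemma weak_nu3_transport: "weak_nu3 V f \<Longrightarrow> weak_nu3 (h ` V) (transport3 h g f)"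
  unfolding weak_nu3_def idem3_def by auto

lemma weak_nu4_transport: "weak_nu4 V f \<Longrightarrow> weak_nu4 (h ` V) (transport4 h g f)"
  unfolding weak_nu4_def by auto

lemma d_link_transport:
  "d_link V k f f' \<Longrightarrow> d_link (h ` V) k (transport3 h g f) (transport3 h g f')"
  unfolding d_link_def agree_xyy_def agree_xxy_def agree_xyx_def by auto

lemma e_link_transport:
  "e_link V k f f' \<Longrightarrow> e_link (h ` V) k (transport3 h g f) (transport3 h g f')"
  unfolding e_link_def agree_xyy_def agree_xxy_def agree_xyx_def by auto

lemma hm_chain_transport:
  "hm_chain V E n d p e
    \<Longrightarrow> hm_chain (h ` V) (map_prod h h ` E) n
          (\<lambda>k. transport3 h g (d k)) (transport3 h g p) (\<lambda>k. transport3 h g (e k))"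
  unfolding hm_chain_def agree_xyy_def agree_xxy_def
  by (auto simp: idem_pol3_transport d_link_transport e_link_transport)

lemma SD_join_image: "SD_join V E \<Longrightarrow> SD_join (h ` V) (map_prod h h ` E)"
  unfolding SD_join_def has_wnu34_def hobby_mckenzie_iff_hm_chain
  by (fastforce dest: hm_chain_transport pol3_transport pol4_transport
      weak_nu3_transport weak_nu4_transport)

end

lemma SD_join_image_iff:
  assumes left_inverse: "\<And>a. a \<in> V \<Longrightarrow> g (h a) = a" and edges_in_V: "E \<subseteq> V \<times> V"
  shows "SD_join (h ` V) (map_prod h h ` E) \<longleftrightarrow> SD_join V E"
proof
  assume "SD_join (h ` V) (map_prod h h ` E)"
  moreover have "h (g b) = b" if "b \<in> h ` V" for b
    using that left_inverse by auto
  moreover have "map_prod h h ` E \<subseteq> h ` V \<times> h ` V"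
    using edges_in_V by auto
  ultimately have "SD_join (g ` h ` V) (map_prod g g ` map_prod h h ` E)"
    using SD_join_image[where h=g and g=h and V="h ` V" and E="map_prod h h ` E"] by blast
  moreover have "map_prod g g (map_prod h h x) = x" if "x \<in> E" for x
    using that assms by auto
  then have "g ` h ` V = V" "map_prod g g ` map_prod h h ` E = E"
    using left_inverse by (simp_all add: image_image cong: image_cong)
  ultimately show "SD_join V E" by simp
next
  show "SD_join V E \<Longrightarrow> SD_join (h ` V) (map_prod h h ` E)"
    by (rule SD_join_image[where h=h and g=g, OF assms])
qed

section \<open>Adding a source or a sink\<close>

definition absorb3 :: "'a \<Rightarrow> ('a \<Rightarrow> 'a \<Rightarrow> 'a \<Rightarrow> 'a) \<Rightarrow> 'a \<Rightarrow> 'a \<Rightarrow> 'a \<Rightarrow> 'a" where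
  "absorb3 s f x y z = (if x = s \<or> y = s \<or> z = s then s else f x y z)"

definition absorb4 :: "'a \<Rightarrow> ('a \<Rightarrow> 'a \<Rightarrow> 'a \<Rightarrow> 'a \<Rightarrow> 'a) \<Rightarrow> 'a \<Rightarrow> 'a \<Rightarrow> 'a \<Rightarrow> 'a \<Rightarrow> 'a" where
  "absorb4 s f x y z w = (if x = s \<or> y = s \<or> z = s \<or> w = s then s else f x y z w)"

definition bridge_left :: "'a \<Rightarrow> 'a \<Rightarrow> 'a \<Rightarrow> 'a \<Rightarrow> 'a" where
  "bridge_left s x y z = (if x = s \<or> (y = s) \<noteq> (z = s) then s else x)"

definition bridge_right :: "'a \<Rightarrow> 'a \<Rightarrow> 'a \<Rightarrow> 'a \<Rightarrow> 'a" where
  "bridge_right s x y z = (if z = s \<or> (x = s) \<noteq> (y = s) then s else z)"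

lemma weak_nu3_absorb3: "weak_nu3 V f \<Longrightarrow> weak_nu3 (insert s V) (absorb3 s f)"
  unfolding weak_nu3_def idem3_def absorb3_def by auto

lemma weak_nu4_absorb4: "weak_nu4 V f \<Longrightarrow> weak_nu4 (insert s V) (absorb4 s f)"
  unfolding weak_nu4_def absorb4_def by auto

lemma agree_xyy_absorb3: "agree_xyy V f g \<Longrightarrow> agree_xyy (insert s V) (absorb3 s f) (absorb3 s g)"
  unfolding agree_xyy_def absorb3_def by auto

lemma agree_xxy_absorb3: "agree_xxy V f g \<Longrightarrow> agree_xxy (insert s V) (absorb3 s f) (absorb3 s g)"
  unfolding agree_xxy_def absorb3_def by auto

lemma agree_xyx_absorb3: "agree_xyx V f g \<Longrightarrow> agree_xyx (insert s V) (absorb3 s f) (absorb3 s g)"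
  unfolding agree_xyx_def absorb3_def by auto

lemma d_link_absorb3: "d_link V k f g \<Longrightarrow> d_link (insert s V) k (absorb3 s f) (absorb3 s g)"
  unfolding d_link_def by (simp add: agree_xyy_absorb3 agree_xxy_absorb3 agree_xyx_absorb3)

lemma e_link_absorb3: "e_link V k f g \<Longrightarrow> e_link (insert s V) k (absorb3 s f) (absorb3 s g)"
  unfolding e_link_def by (simp add: agree_xyy_absorb3 agree_xxy_absorb3 agree_xyx_absorb3)

(*
  The chain for the digraph with new source s is
    \<pi>\<^sub>1, bridge_left s, absorb3 s d\<^sub>0, ..., absorb3 s d\<^sub>n  and
    absorb3 s e\<^sub>0, ..., absorb3 s e\<^sub>n, bridge_right s, \<pi>\<^sub>3,
  of length n + 2.  The link between absorb3 s e\<^sub>n and bridge_right s is only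
  satisfied at an even position, which is why n is first made even.
*)
definition source_chain_d ::
  "'a \<Rightarrow> (nat \<Rightarrow> 'a \<Rightarrow> 'a \<Rightarrow> 'a \<Rightarrow> 'a) \<Rightarrow> nat \<Rightarrow> 'a \<Rightarrow> 'a \<Rightarrow> 'a \<Rightarrow> 'a" where
  "source_chain_d s d k =
     (case k of 0 \<Rightarrow> (\<lambda>x y z. x) | Suc 0 \<Rightarrow> bridge_left s | Suc (Suc m) \<Rightarrow> absorb3 s (d m))"

definition source_chain_e ::
  "'a \<Rightarrow> nat \<Rightarrow> (nat \<Rightarrow> 'a \<Rightarrow> 'a \<Rightarrow> 'a \<Rightarrow> 'a) \<Rightarrow> nat \<Rightarrow> 'a \<Rightarrow> 'a \<Rightarrow> 'a \<Rightarrow> 'a" where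
  "source_chain_e s n e k =
     (if k \<le> n then absorb3 s (e k) else if k = Suc n then bridge_right s else (\<lambda>x y z. z))"

lemma source_chain_d_link:
  assumes "hm_chain V E n d p e" and "k < n + 2"
  shows "d_link (insert s V) k (source_chain_d s d k) (source_chain_d s d (Suc k))"
proof -
  consider "k = 0" | "k = 1" | m where "k = Suc (Suc m)" "m < n"
    using assms(2) by (metis One_nat_def add_2_eq_Suc' add_less_cancel_right not0_implies_Suc)
  then show ?thesis
  proof cases
    case 1
    then show ?thesis
      unfolding source_chain_d_def d_link_def agree_xyy_def bridge_left_def by simp
  next
    case 2
    have "\<forall>x\<in>V. \<forall>y\<in>V. d 0 x x y = x \<and> d 0 x y x = x"
      using assms(1) unfolding hm_chain_def by blast
    with 2 show ?thesis
      unfolding source_chain_d_def d_link_def agree_xxy_def agree_xyx_def bridge_left_def absorb3_def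
      by auto
  next
    case 3
    then have "d_link V m (d m) (d (Suc m))"
      using assms(1) unfolding hm_chain_def by blast
    with 3 show ?thesis
      unfolding source_chain_d_def by (simp add: d_link_absorb3)
  qed
qed

lemma source_chain_e_link:
  assumes "hm_chain V E n d p e" and "even n" and "k < n + 2"
  shows "e_link (insert s V) k (source_chain_e s n e k) (source_chain_e s n e (Suc k))"
proof -
  consider "k < n" | "k = n" | "k = Suc n"
    using assms(3) by linarith
  then show ?thesis
  proof cases
    case 1
    then have "e_link V k (e k) (e (Suc k))"
      using assms(1) unfolding hm_chain_def by blast
    with 1 show ?thesis
      unfolding source_chain_e_def by (simp add: e_link_absorb3)
  next
    case 2
    have "\<forall>x\<in>V. \<forall>y\<in>V. e n x y y = y \<and> e n x y x = x"
      using assms(1) unfolding hm_chain_def by blast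
    with 2 assms(2) show ?thesis
      unfolding source_chain_e_def e_link_def agree_xyy_def agree_xyx_def bridge_right_def absorb3_def
      by auto
  next
    case 3
    with assms(2) show ?thesis
      unfolding source_chain_e_def e_link_def agree_xxy_def bridge_right_def by auto
  qed
qed

context
  fixes W :: "'a set" and F :: "('a \<times> 'a) set" and s :: 'a
  assumes edges_in_W: "F \<subseteq> W \<times> W" and source_new: "s \<notin> W"
begin

lemma pol3_absorb3:
  assumes "pol3 W F f"
  shows "pol3 (insert s W) (F \<union> {s} \<times> W) (absorb3 s f)"
proof (rule pol3I)
  fix a1 a2 a3 b1 b2 b3
  assume edges: "(a1, b1) \<in> F \<union> {s} \<times> W" "(a2, b2) \<in> F \<union> {s} \<times> W" "(a3, b3) \<in> F \<union> {s} \<times> W"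
  then have "b1 \<in> W" "b2 \<in> W" "b3 \<in> W"
    using edges_in_W by auto
  moreover have "(f a1 a2 a3, f b1 b2 b3) \<in> F" if "a1 \<noteq> s" "a2 \<noteq> s" "a3 \<noteq> s"
    using that edges by (intro pol3_edge[OF assms]) auto
  ultimately show "(absorb3 s f a1 a2 a3, absorb3 s f b1 b2 b3) \<in> F \<union> {s} \<times> W"
    using source_new pol3_closed[OF assms] unfolding absorb3_def by auto
qed (use pol3_closed[OF assms] in \<open>auto simp: absorb3_def\<close>)

lemma pol4_absorb4:
  assumes "pol4 W F f"
  shows "pol4 (insert s W) (F \<union> {s} \<times> W) (absorb4 s f)"
proof (rule pol4I)
  fix a1 a2 a3 a4 b1 b2 b3 b4
  assume edges: "(a1, b1) \<in> F \<union> {s} \<times> W" "(a2, b2) \<in> F \<union> {s} \<times> W"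
    "(a3, b3) \<in> F \<union> {s} \<times> W" "(a4, b4) \<in> F \<union> {s} \<times> W"
  then have "b1 \<in> W" "b2 \<in> W" "b3 \<in> W" "b4 \<in> W"
    using edges_in_W by auto
  moreover have "(f a1 a2 a3 a4, f b1 b2 b3 b4) \<in> F" if "a1 \<noteq> s" "a2 \<noteq> s" "a3 \<noteq> s" "a4 \<noteq> s"
    using that edges by (intro pol4_edge[OF assms]) auto
  ultimately show "(absorb4 s f a1 a2 a3 a4, absorb4 s f b1 b2 b3 b4) \<in> F \<union> {s} \<times> W"
    using source_new pol4_closed[OF assms] unfolding absorb4_def by auto
qed (use pol4_closed[OF assms] in \<open>auto simp: absorb4_def\<close>)

lemma idem_pol3_absorb3:
  "idem_pol3 W F f \<Longrightarrow> idem_pol3 (insert s W) (F \<union> {s} \<times> W) (absorb3 s f)"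
  unfolding idem_pol3_def using pol3_absorb3 by (auto simp: idem3_def absorb3_def)

lemma idem_pol3_bridge_left: "idem_pol3 (insert s W) (F \<union> {s} \<times> W) (bridge_left s)"
  unfolding idem_pol3_def
proof (intro conjI pol3I)
  fix a1 a2 a3 b1 b2 b3
  assume "(a1, b1) \<in> F \<union> {s} \<times> W" "(a2, b2) \<in> F \<union> {s} \<times> W" "(a3, b3) \<in> F \<union> {s} \<times> W"
  moreover from this have "b1 \<in> W" "b2 \<in> W" "b3 \<in> W"
    using edges_in_W by auto
  ultimately show "(bridge_left s a1 a2 a3, bridge_left s b1 b2 b3) \<in> F \<union> {s} \<times> W"
    using source_new unfolding bridge_left_def by auto
qed (auto simp: idem3_def bridge_left_def)

lemma idem_pol3_bridge_right: "idem_pol3 (insert s W) (F \<union> {s} \<times> W) (bridge_right s)"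
  unfolding idem_pol3_def
proof (intro conjI pol3I)
  fix a1 a2 a3 b1 b2 b3
  assume "(a1, b1) \<in> F \<union> {s} \<times> W" "(a2, b2) \<in> F \<union> {s} \<times> W" "(a3, b3) \<in> F \<union> {s} \<times> W"
  moreover from this have "b1 \<in> W" "b2 \<in> W" "b3 \<in> W"
    using edges_in_W by auto
  ultimately show "(bridge_right s a1 a2 a3, bridge_right s b1 b2 b3) \<in> F \<union> {s} \<times> W"
    using source_new unfolding bridge_right_def by auto
qed (auto simp: idem3_def bridge_right_def)

lemma idem_pol3_projections:
  "idem_pol3 (insert s W) (F \<union> {s} \<times> W) (\<lambda>x y z. x)"
  "idem_pol3 (insert s W) (F \<union> {s} \<times> W) (\<lambda>x y z. z)"
  unfolding idem_pol3_def idem3_def pol3_def by auto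

lemma pol3_remove_source:
  assumes pol: "pol3 (insert s W) (F \<union> {s} \<times> W) f" and fixes_s: "f s s s = s"
  shows "pol3 W F f"
proof -
  \<comment> \<open>old vertices are the out-neighbours of s = f s s s\<close>
  have closed: "f a b c \<in> W" if "a \<in> W" "b \<in> W" "c \<in> W" for a b c
    using pol3_edge[OF pol, of s a s b s c] that fixes_s source_new edges_in_W by auto
  show ?thesis
  proof (rule pol3I)
    fix a1 a2 a3 b1 b2 b3
    assume edges: "(a1, b1) \<in> F" "(a2, b2) \<in> F" "(a3, b3) \<in> F"
    then have "f a1 a2 a3 \<in> W"
      using edges_in_W by (blast intro: closed)
    then show "(f a1 a2 a3, f b1 b2 b3) \<in> F"
      using pol3_edge[OF pol, of a1 b1 a2 b2 a3 b3] edges source_new by auto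
  qed (rule closed)
qed

lemma pol4_remove_source:
  assumes pol: "pol4 (insert s W) (F \<union> {s} \<times> W) f" and fixes_s: "f s s s s = s"
  shows "pol4 W F f"
proof -
  have closed: "f a b c d \<in> W" if "a \<in> W" "b \<in> W" "c \<in> W" "d \<in> W" for a b c d
    using pol4_edge[OF pol, of s a s b s c s d] that fixes_s source_new edges_in_W by auto
  show ?thesis
  proof (rule pol4I)
    fix a1 a2 a3 a4 b1 b2 b3 b4
    assume edges: "(a1, b1) \<in> F" "(a2, b2) \<in> F" "(a3, b3) \<in> F" "(a4, b4) \<in> F"
    then have "f a1 a2 a3 a4 \<in> W"
      using edges_in_W by (blast intro: closed)
    then show "(f a1 a2 a3 a4, f b1 b2 b3 b4) \<in> F"
      using pol4_edge[OF pol, of a1 b1 a2 b2 a3 b3 a4 b4] edges source_new by auto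
  qed (rule closed)
qed

lemma idem_pol3_remove_source:
  "idem_pol3 (insert s W) (F \<union> {s} \<times> W) f \<Longrightarrow> idem_pol3 W F f"
  unfolding idem_pol3_def idem3_def using pol3_remove_source by blast

lemma has_wnu34_add_source: "has_wnu34 W F \<Longrightarrow> has_wnu34 (insert s W) (F \<union> {s} \<times> W)"
  unfolding has_wnu34_def
proof (elim exE conjE)
  fix w1 w2
  assume "pol3 W F w1" "pol4 W F w2" "weak_nu3 W w1" "weak_nu4 W w2"
    and link: "\<forall>x\<in>W. \<forall>y\<in>W. w1 y x x = w2 y x x x"
  moreover have "\<forall>x\<in>insert s W. \<forall>y\<in>insert s W. absorb3 s w1 y x x = absorb4 s w2 y x x x"
    using link unfolding absorb3_def absorb4_def by auto
  ultimately show "\<exists>w1 w2. pol3 (insert s W) (F \<union> {s} \<times> W) w1 \<and> pol4 (insert s W) (F \<union> {s} \<times> W) w2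
      \<and> weak_nu3 (insert s W) w1 \<and> weak_nu4 (insert s W) w2
      \<and> (\<forall>x\<in>insert s W. \<forall>y\<in>insert s W. w1 y x x = w2 y x x x)"
    by (blast intro: pol3_absorb3 pol4_absorb4 weak_nu3_absorb3 weak_nu4_absorb4)
qed

lemma has_wnu34_remove_source: "has_wnu34 (insert s W) (F \<union> {s} \<times> W) \<Longrightarrow> has_wnu34 W F"
  unfolding has_wnu34_def weak_nu3_def weak_nu4_def idem3_def
  by (blast intro: pol3_remove_source pol4_remove_source)

lemma hm_chain_remove_source:
  "hm_chain (insert s W) (F \<union> {s} \<times> W) n d p e \<Longrightarrow> hm_chain W F n d p e"
  unfolding hm_chain_def agree_xyy_def agree_xxy_def
  by (blast intro: idem_pol3_remove_source d_link_mono e_link_mono)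

lemma idem_pol3_source_chain_d:
  assumes "hm_chain W F n d p e" and "k \<le> n + 2"
  shows "idem_pol3 (insert s W) (F \<union> {s} \<times> W) (source_chain_d s d k)"
proof -
  consider "k = 0" | "k = 1" | m where "k = Suc (Suc m)" "m \<le> n"
    using assms(2) by (metis One_nat_def add_2_eq_Suc' add_le_cancel_right not0_implies_Suc)
  then show ?thesis
  proof cases
    case 3
    then have "idem_pol3 W F (d m)"
      using assms(1) unfolding hm_chain_def by blast
    with 3 show ?thesis
      unfolding source_chain_d_def by (simp add: idem_pol3_absorb3)
  qed (simp_all add: source_chain_d_def idem_pol3_projections idem_pol3_bridge_left)
qed

lemma idem_pol3_source_chain_e:
  assumes "hm_chain W F n d p e" and "k \<le> n + 2"
  shows "idem_pol3 (insert s W) (F \<union> {s} \<times> W) (source_chain_e s n e k)"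
  using assms idem_pol3_absorb3
  unfolding source_chain_e_def hm_chain_def
  by (simp add: idem_pol3_projections idem_pol3_bridge_right)

lemma hm_chain_add_source:
  assumes chain: "hm_chain W F n d p e" and "even n"
  shows "hm_chain (insert s W) (F \<union> {s} \<times> W) (n + 2)
           (source_chain_d s d) (absorb3 s p) (source_chain_e s n e)"
proof -
  have "idem_pol3 W F p" "agree_xyy W (d n) p" "agree_xxy W p (e 0)"
    using chain unfolding hm_chain_def by blast+
  then show ?thesis
    using idem_pol3_source_chain_d[OF chain] idem_pol3_source_chain_e[OF chain]
      source_chain_d_link[OF chain] source_chain_e_link[OF chain \<open>even n\<close>]
    unfolding hm_chain_def
    by (simp add: idem_pol3_absorb3 agree_xyy_absorb3 agree_xxy_absorb3
        source_chain_d_def source_chain_e_def numeral_2_eq_2)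
qed

lemma SD_join_add_source_iff: "SD_join (insert s W) (F \<union> {s} \<times> W) \<longleftrightarrow> SD_join W F"
proof
  assume "SD_join (insert s W) (F \<union> {s} \<times> W)"
  then show "SD_join W F"
    unfolding SD_join_def hobby_mckenzie_iff_hm_chain
    using has_wnu34_remove_source hm_chain_remove_source by blast
next
  assume "SD_join W F"
  then obtain n d p e where "has_wnu34 W F" "hm_chain W F n d p e"
    unfolding SD_join_def hobby_mckenzie_iff_hm_chain by blast
  moreover from this(2) obtain n' d' e' where "even n'" "hm_chain W F n' d' p e'"
    by (rule hm_chain_even_length)
  ultimately show "SD_join (insert s W) (F \<union> {s} \<times> W)"
    unfolding SD_join_def hobby_mckenzie_iff_hm_chain
    using has_wnu34_add_source hm_chain_add_source by blast
qed

end

lemma pol3_converse: "pol3 V (converse E) f \<longleftrightarrow> pol3 V E f"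
  unfolding pol3_def converse_iff by blast

lemma pol4_converse: "pol4 V (converse E) f \<longleftrightarrow> pol4 V E f"
  unfolding pol4_def converse_iff by blast

lemma SD_join_converse: "SD_join V (converse E) \<longleftrightarrow> SD_join V E"
  unfolding SD_join_def has_wnu34_def hobby_mckenzie_def pol3_converse pol4_converse ..

lemma SD_join_add_sink_iff:
  assumes "F \<subseteq> W \<times> W" and "t \<notin> W"
  shows "SD_join (insert t W) (F \<union> W \<times> {t}) \<longleftrightarrow> SD_join W F"
proof -
  have "converse (F \<union> W \<times> {t}) = converse F \<union> {t} \<times> W"
    by auto
  moreover have "converse F \<subseteq> W \<times> W"
    using assms(1) by auto
  ultimately show ?thesis
    using SD_join_add_source_iff[OF _ assms(2)] SD_join_converse by metis
qed

section \<open>The digraphs G^[i,j]\<close>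

lemma blowup_vertices_simps [simp]:
  "Inl a \<in> blowup_vertices V i j \<longleftrightarrow> a \<in> V"
  "Inr u \<in> blowup_vertices V i j \<longleftrightarrow> i \<le> u \<and> u \<le> -1 \<or> 1 \<le> u \<and> u \<le> j"
  unfolding blowup_vertices_def by auto

lemma blowup_edges_simps [simp]:
  "(Inl a, Inl b) \<in> blowup_edges V E i j \<longleftrightarrow> (a, b) \<in> E"
  "(Inr u, Inl b) \<in> blowup_edges V E i j \<longleftrightarrow> i \<le> u \<and> u \<le> -1 \<and> b \<in> V"
  "(Inl a, Inr w) \<in> blowup_edges V E i j \<longleftrightarrow> a \<in> V \<and> 1 \<le> w \<and> w \<le> j"
  "(Inr u, Inr w) \<in> blowup_edges V E i j \<longleftrightarrow>
     (i \<le> u \<and> u \<le> -1 \<or> 1 \<le> u \<and> u \<le> j) \<and> (i \<le> w \<and> w \<le> -1 \<or> 1 \<le> w \<and> w \<le> j) \<and> u < w"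
  unfolding blowup_edges_def by auto

lemma blowup_edges_subset:
  "E \<subseteq> V \<times> V \<Longrightarrow> blowup_edges V E i j \<subseteq> blowup_vertices V i j \<times> blowup_vertices V i j"
  unfolding blowup_vertices_def blowup_edges_def by auto

lemma blowup_vertices_0_0: "blowup_vertices V 0 0 = Inl ` V"
  unfolding blowup_vertices_def by auto

lemma blowup_edges_0_0: "blowup_edges V E 0 0 = map_prod Inl Inl ` E"
proof (rule set_eqI)
  fix x :: "('a + int) \<times> ('a + int)"
  obtain a b where x: "x = (a, b)"
    by fastforce
  show "x \<in> blowup_edges V E 0 0 \<longleftrightarrow> x \<in> map_prod Inl Inl ` E"
    unfolding x by (cases a; cases b) auto
qed

lemma blowup_vertices_add_sink:
  "0 \<le> j \<Longrightarrow> blowup_vertices V i (j + 1) = insert (Inr (j + 1)) (blowup_vertices V i j)"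
  unfolding blowup_vertices_def by auto

lemma blowup_edges_add_sink:
  assumes "0 \<le> j"
  shows "blowup_edges V E i (j + 1) = blowup_edges V E i j \<union> blowup_vertices V i j \<times> {Inr (j + 1)}"
proof (rule set_eqI)
  fix x :: "('a + int) \<times> ('a + int)"
  obtain a b where x: "x = (a, b)"
    by fastforce
  show "x \<in> blowup_edges V E i (j + 1) \<longleftrightarrow> x \<in> blowup_edges V E i j \<union> blowup_vertices V i j \<times> {Inr (j + 1)}"
    unfolding x using assms by (cases a; cases b) auto
qed

lemma blowup_vertices_add_source:
  "i \<le> 0 \<Longrightarrow> blowup_vertices V (i - 1) j = insert (Inr (i - 1)) (blowup_vertices V i j)"
  unfolding blowup_vertices_def by auto

lemma blowup_edges_add_source:
  assumes "i \<le> 0"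
  shows "blowup_edges V E (i - 1) j = blowup_edges V E i j \<union> {Inr (i - 1)} \<times> blowup_vertices V i j"
proof (rule set_eqI)
  fix x :: "('a + int) \<times> ('a + int)"
  obtain a b where x: "x = (a, b)"
    by fastforce
  show "x \<in> blowup_edges V E (i - 1) j \<longleftrightarrow> x \<in> blowup_edges V E i j \<union> {Inr (i - 1)} \<times> blowup_vertices V i j"
    unfolding x using assms by (cases a; cases b) auto
qed

lemma SD_join_blowup_add_sink:
  assumes "E \<subseteq> V \<times> V" and "0 \<le> j"
  shows "SD_join (blowup_vertices V i (j + 1)) (blowup_edges V E i (j + 1))
     \<longleftrightarrow> SD_join (blowup_vertices V i j) (blowup_edges V E i j)"
  unfolding blowup_vertices_add_sink[OF assms(2)] blowup_edges_add_sink[OF assms(2)]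
  using assms by (intro SD_join_add_sink_iff blowup_edges_subset) auto

lemma SD_join_blowup_add_source:
  assumes "E \<subseteq> V \<times> V" and "i \<le> 0"
  shows "SD_join (blowup_vertices V (i - 1) j) (blowup_edges V E (i - 1) j)
     \<longleftrightarrow> SD_join (blowup_vertices V i j) (blowup_edges V E i j)"
  unfolding blowup_vertices_add_source[OF assms(2)] blowup_edges_add_source[OF assms(2)]
  using assms by (intro SD_join_add_source_iff blowup_edges_subset) auto

theorem corollary5p6:
  fixes V :: "'a set" and E :: "('a \<times> 'a) set" and i j :: int
  assumes "digraph V E" and "i \<le> 0" and "0 \<le> j"
  shows "SD_join V E \<longleftrightarrow> SD_join (blowup_vertices V i j) (blowup_edges V E i j)"
proof -
  have edges: "E \<subseteq> V \<times> V"
    using assms(1) unfolding digraph_def by blast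
  have "SD_join V E \<longleftrightarrow> SD_join (blowup_vertices V 0 0) (blowup_edges V E 0 0)"
    unfolding blowup_vertices_0_0 blowup_edges_0_0
    using SD_join_image_iff[where h = Inl and g = projl, OF _ edges] by auto
  also have "\<dots> \<longleftrightarrow> SD_join (blowup_vertices V 0 j) (blowup_edges V E 0 j)"
    using assms(3)
  proof (induction j rule: int_ge_induct)
    case (step j)
    then show ?case using SD_join_blowup_add_sink[OF edges] by simp
  qed simp
  also have "\<dots> \<longleftrightarrow> SD_join (blowup_vertices V i j) (blowup_edges V E i j)"
    using assms(2)
  proof (induction i rule: int_le_induct)
    case (step i)
    then show ?case using SD_join_blowup_add_source[OF edges] by simp
  qed simp
  finally show ?thesis .
qed

end
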